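(* The pair $m=(\mathfrak L,\mathfrak R)$, where $\mathfrak L\colon\mathcal L_G\to\mathcal L_S$, $\mathfrak L(\overleftarrow e)=Se$, $\mathfrak L(r(e,u,f))=\rho(e,u,f)$, and $\mathfrak R\colon\mathcal R_G\to\mathcal R_S$, $\mathfrak R(\overrightarrow e)=eS$, $\mathfrak R(l(e,u,f))=\lambda(e,u,f)$, is an isomorphism of cross-connections from $(\mathcal R_G,\mathcal L_G;\Gamma_G)$ to $(\mathcal R_S,\mathcal L_S;\Gamma_S)$: $\mathfrak L$ and $\mathfrak R$ are isomorphisms of normal categories, and (M1) for every $(\overleftarrow e,\overrightarrow e)\in E_{\Gamma_G}$ one has $(\mathfrak L(\overleftarrow e),\mathfrak R(\overrightarrow e))=(Se,eS)\in E_{\Gamma_S}$ and $\mathfrak L(r^e(\overleftarrow g))=\rho^e(\mathfrak L(\overleftarrow g))$ for all $g\in E$; (M2) for $(\overleftarrow e,\overrightarrow e),(\overleftarrow f,\overrightarrow f)\in E_{\Gamma_G}$ and $u\in eSf$, $\mathfrak R$ maps the transpose of $r(e,u,f)$ to the transpose of $\mathfrak L(r(e,u,f))$.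
   Context: Let $S$ be a regular semigroup, $E=E(S)$. $\mathcal L_G$: objects $E/\mathscr L$ (classes $\overleftarrow e$); morphisms $\overleftarrow e\to\overleftarrow f$ the classes $r(e,u,f)$, $u\in eSf$, under $(e,u,f)\sim(g,v,h)$ iff $e\mathscr L g$, $f\mathscr L h$, $u=ev$; composition $r(e,u,f)r(f,v,g)=r(e,uv,g)$. $\mathcal R_G$: objects $E/\mathscr R$ (classes $\overrightarrow e$); morphisms $\overrightarrow e\to\overrightarrow f$ the classes $l(e,u,f)$, $u\in fSe$, under $(e,u,f)\sim(g,v,h)$ iff $e\mathscr R g$, $f\mathscr R h$, $u=ve$; composition $l(e,u,f)l(f,v,g)=l(e,vu,g)$. $\mathcal L_S$: objects $Se$, $e\in E$; morphisms $\rho(e,u,f)\colon Se\to Sf$, $t\mapsto tu$, $u\in eSf$. $\mathcal R_S$: objects $eS$; morphisms $\lambda(e,w,f)\colon eS\to fS$, $t\mapsto wt$, $w\in fSe$. Composition is left to right. $\Gamma_G\colon\mathcal R_G\to N^*\mathcal L_G$ is the cross-connection $\overrightarrow e\mapsto H(r^e;-)$, where $r^e(\overleftarrow g)=r(g,ge,e)$, and $\Gamma_S\colon\mathcal R_S\to N^*\mathcal L_S$ is Nambooripad's cross-connection $eS\mapsto H(\rho^e;-)$ of $S$, where $\rho^e(Sg)=\rho(g,ge,e)$. Their biordered sets are $E_{\Gamma_G}=\{(\overleftarrow e,\overrightarrow e):e\in E\}$ and $E_{\Gamma_S}=\{(Se,eS):e\in E\}$, with associated idempotent cones $\gamma(\overleftarrow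 e,\overrightarrow e)=r^e$ and $\gamma(Se,eS)=\rho^e$. Transposes: for $(\overleftarrow e,\overrightarrow e),(\overleftarrow f,\overrightarrow f)\in E_{\Gamma_G}$ the transpose of $r(e,u,f)$ is $l(f,u,e)\colon\overrightarrow f\to\overrightarrow e$, and for $(Se,eS),(Sf,fS)\in E_{\Gamma_S}$ the transpose of $\rho(e,u,f)$ is $\lambda(f,u,e)\colon fS\to eS$. A morphism of cross-connections $(\mathcal D,\mathcal C;\Gamma)\to(\mathcal D',\mathcal C';\Gamma')$ is a pair $(F,G)$ of inclusion-preserving functors $F\colon\mathcal C\to\mathcal C'$, $G\colon\mathcal D\to\mathcal D'$ with (M1) $(c,d)\in E_\Gamma\Rightarrow(F(c),G(d))\in E_{\Gamma'}$ and $F(\gamma(c,d)(c'))=\gamma(F(c),G(d))(F(c'))$ for all objects $c'$ of $\mathcal C$; (M2) if $(c,d),(c',d')\in E_\Gamma$ and $f^*\colon d'\to d$ is the transpose of $f\colon c\to c'$ then $G(f^* )=(F(f))^*$. An isomorphism of cross-connections is such a morphism whose components are isomorphisms of normal categories (inclusion-preserving isomorphisms of categories with inclusion-preserving inverses). *)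

theory Defs
  imports Main "HOL-Library.FuncSet"
begin

text \<open>The regular semigroup S is the whole carrier of a type of class semigroup_mult.
  Composition of morphisms is written left to right: Comp m n means first m, then n.\<close>

definition idems :: "'a::semigroup_mult set" where
  "idems = {e. e * e = e}"

definition lideal :: "'a::semigroup_mult \<Rightarrow> 'a set" where
  "lideal e = {s * e | s. True}"

definition rideal :: "'a::semigroup_mult \<Rightarrow> 'a set" where
  "rideal e = {e * s | s. True}"

definition sandw :: "'a::semigroup_mult \<Rightarrow> 'a \<Rightarrow> 'a set" where
  "sandw e f = {e * s * f | s. True}"

text \<open>Green's relations L and R (via S^1 a = S^1 b, resp. a S^1 = b S^1).\<close>

definition greenL :: "'a::semigroup_mult \<Rightarrow> 'a \<Rightarrow> bool" where
  "greenL a b \<longleftrightarrow> (a = b \<or> (\<exists>x. a = x * b)) \<and> (b = a \<or> (\<exists>y. b = y * a))"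

definition greenR :: "'a::semigroup_mult \<Rightarrow> 'a \<Rightarrow> bool" where
  "greenR a b \<longleftrightarrow> (a = b \<or> (\<exists>x. a = b * x)) \<and> (b = a \<or> (\<exists>y. b = a * y))"

definition Lcl :: "'a::semigroup_mult \<Rightarrow> 'a set" where
  "Lcl e = {g \<in> idems. greenL g e}"

definition Rcl :: "'a::semigroup_mult \<Rightarrow> 'a set" where
  "Rcl e = {g \<in> idems. greenR g e}"

record ('o, 'm) ncat =
  Ob :: "'o set"
  Ar :: "'m set"
  cDom :: "'m \<Rightarrow> 'o"
  cCod :: "'m \<Rightarrow> 'o"
  Idm :: "'o \<Rightarrow> 'm"
  Comp :: "'m \<Rightarrow> 'm \<Rightarrow> 'm"
  Incl :: "'m set"

definition iso_ncat :: "('o, 'm) ncat \<Rightarrow> ('p, 'n) ncat \<Rightarrow> ('o \<Rightarrow> 'p) \<Rightarrow> ('m \<Rightarrow> 'n) \<Rightarrow> bool" where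
  "iso_ncat C D Fo Fa \<longleftrightarrow>
     bij_betw Fo (Ob C) (Ob D) \<and> bij_betw Fa (Ar C) (Ar D) \<and>
     (\<forall>m\<in>Ar C. cDom D (Fa m) = Fo (cDom C m) \<and> cCod D (Fa m) = Fo (cCod C m)) \<and>
     (\<forall>c\<in>Ob C. Fa (Idm C c) = Idm D (Fo c)) \<and>
     (\<forall>m\<in>Ar C. \<forall>n\<in>Ar C. cCod C m = cDom C n \<longrightarrow> Fa (Comp C m n) = Comp D (Fa m) (Fa n)) \<and>
     (\<forall>m\<in>Incl C. Fa m \<in> Incl D) \<and>
     (\<forall>m\<in>Ar C. Fa m \<in> Incl D \<longrightarrow> m \<in> Incl C)"

definition LGtrip :: "('a::semigroup_mult \<times> 'a \<times> 'a) set" where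
  "LGtrip = {(e, u, f). e \<in> idems \<and> f \<in> idems \<and> u \<in> sandw e f}"

definition rG :: "'a::semigroup_mult \<Rightarrow> 'a \<Rightarrow> 'a \<Rightarrow> ('a \<times> 'a \<times> 'a) set" where
  "rG e u f = {(g, v, h) \<in> LGtrip. greenL e g \<and> greenL f h \<and> u = e * v}"

definition RGtrip :: "('a::semigroup_mult \<times> 'a \<times> 'a) set" where
  "RGtrip = {(e, u, f). e \<in> idems \<and> f \<in> idems \<and> u \<in> sandw f e}"

definition lG :: "'a::semigroup_mult \<Rightarrow> 'a \<Rightarrow> 'a \<Rightarrow> ('a \<times> 'a \<times> 'a) set" where
  "lG e u f = {(g, v, h) \<in> RGtrip. greenR e g \<and> greenR f h \<and> u = v * e}"

definition LG_cat :: "('a::semigroup_mult set, ('a \<times> 'a \<times> 'a) set) ncat" where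
  "LG_cat = \<lparr> Ob = Lcl ` idems,
     Ar = {rG e u f | e u f. (e, u, f) \<in> LGtrip},
     cDom = (\<lambda>m. THE c. \<exists>e u f. (e, u, f) \<in> LGtrip \<and> m = rG e u f \<and> c = Lcl e),
     cCod = (\<lambda>m. THE c. \<exists>e u f. (e, u, f) \<in> LGtrip \<and> m = rG e u f \<and> c = Lcl f),
     Idm = (\<lambda>c. THE m. \<exists>e\<in>idems. c = Lcl e \<and> m = rG e e e),
     Comp = (\<lambda>m n. THE k. \<exists>e u f v g. (e, u, f) \<in> LGtrip \<and> (f, v, g) \<in> LGtrip \<and>
               m = rG e u f \<and> n = rG f v g \<and> k = rG e (u * v) g),
     Incl = {rG e e f | e f. e \<in> idems \<and> f \<in> idems \<and> e * f = e} \<rparr>"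

definition RG_cat :: "('a::semigroup_mult set, ('a \<times> 'a \<times> 'a) set) ncat" where
  "RG_cat = \<lparr> Ob = Rcl ` idems,
     Ar = {lG e u f | e u f. (e, u, f) \<in> RGtrip},
     cDom = (\<lambda>m. THE c. \<exists>e u f. (e, u, f) \<in> RGtrip \<and> m = lG e u f \<and> c = Rcl e),
     cCod = (\<lambda>m. THE c. \<exists>e u f. (e, u, f) \<in> RGtrip \<and> m = lG e u f \<and> c = Rcl f),
     Idm = (\<lambda>c. THE m. \<exists>e\<in>idems. c = Rcl e \<and> m = lG e e e),
     Comp = (\<lambda>m n. THE k. \<exists>e u f v g. (e, u, f) \<in> RGtrip \<and> (f, v, g) \<in> RGtrip \<and>
               m = lG e u f \<and> n = lG f v g \<and> k = lG e (v * u) g),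
     Incl = {lG e e f | e f. e \<in> idems \<and> f \<in> idems \<and> f * e = e} \<rparr>"

text \<open>A morphism is represented as (domain, codomain, map restricted to the domain).\<close>

definition rhoS :: "'a::semigroup_mult \<Rightarrow> 'a \<Rightarrow> 'a \<Rightarrow> 'a set \<times> 'a set \<times> ('a \<Rightarrow> 'a)" where
  "rhoS e u f = (lideal e, lideal f, restrict (\<lambda>t. t * u) (lideal e))"

definition lamS :: "'a::semigroup_mult \<Rightarrow> 'a \<Rightarrow> 'a \<Rightarrow> 'a set \<times> 'a set \<times> ('a \<Rightarrow> 'a)" where
  "lamS e w f = (rideal e, rideal f, restrict (\<lambda>t. w * t) (rideal e))"

definition mcomp :: "'a set \<times> 'a set \<times> ('a \<Rightarrow> 'a) \<Rightarrow> 'a set \<times> 'a set \<times> ('a \<Rightarrow> 'a)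
                      \<Rightarrow> 'a set \<times> 'a set \<times> ('a \<Rightarrow> 'a)" where
  "mcomp m n = (fst m, fst (snd n), restrict (\<lambda>t. snd (snd n) (snd (snd m) t)) (fst m))"

definition LS_cat :: "('a::semigroup_mult set, 'a set \<times> 'a set \<times> ('a \<Rightarrow> 'a)) ncat" where
  "LS_cat = \<lparr> Ob = lideal ` idems,
     Ar = {rhoS e u f | e u f. (e, u, f) \<in> LGtrip},
     cDom = fst, cCod = (\<lambda>m. fst (snd m)),
     Idm = (\<lambda>A. (A, A, restrict id A)),
     Comp = mcomp,
     Incl = {(lideal e, lideal f, restrict id (lideal e)) | e f.
               e \<in> idems \<and> f \<in> idems \<and> lideal e \<subseteq> lideal f} \<rparr>"

definition RS_cat :: "('a::semigroup_mult set, 'a set \<times> 'a set \<times> ('a \<Rightarrow> 'a)) ncat" where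
  "RS_cat = \<lparr> Ob = rideal ` idems,
     Ar = {lamS e w f | e w f. (e, w, f) \<in> RGtrip},
     cDom = fst, cCod = (\<lambda>m. fst (snd m)),
     Idm = (\<lambda>A. (A, A, restrict id A)),
     Comp = mcomp,
     Incl = {(rideal e, rideal f, restrict id (rideal e)) | e f.
               e \<in> idems \<and> f \<in> idems \<and> rideal e \<subseteq> rideal f} \<rparr>"

definition Lob :: "'a::semigroup_mult set \<Rightarrow> 'a set" where
  "Lob c = (THE A. \<exists>e\<in>idems. c = Lcl e \<and> A = lideal e)"

definition Lar :: "('a::semigroup_mult \<times> 'a \<times> 'a) set \<Rightarrow> 'a set \<times> 'a set \<times> ('a \<Rightarrow> 'a)" where
  "Lar m = (THE k. \<exists>e u f. (e, u, f) \<in> LGtrip \<and> m = rG e u f \<and> k = rhoS e u f)"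

definition Rob :: "'a::semigroup_mult set \<Rightarrow> 'a set" where
  "Rob c = (THE A. \<exists>e\<in>idems. c = Rcl e \<and> A = rideal e)"

definition Rar :: "('a::semigroup_mult \<times> 'a \<times> 'a) set \<Rightarrow> 'a set \<times> 'a set \<times> ('a \<Rightarrow> 'a)" where
  "Rar m = (THE k. \<exists>e u f. (e, u, f) \<in> RGtrip \<and> m = lG e u f \<and> k = lamS e u f)"

definition EGS :: "('a::semigroup_mult set \<times> 'a set) set" where
  "EGS = {(lideal e, rideal e) | e. e \<in> idems}"

definition rcone :: "'a::semigroup_mult \<Rightarrow> 'a set \<Rightarrow> ('a \<times> 'a \<times> 'a) set" where
  "rcone e c = (THE m. \<exists>g\<in>idems. c = Lcl g \<and> m = rG g (g * e) e)"

definition rhocone :: "'a::semigroup_mult \<Rightarrow> 'a set \<Rightarrow> 'a set \<times> 'a set \<times> ('a \<Rightarrow> 'a)" where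
  "rhocone e A = (THE m. \<exists>g\<in>idems. A = lideal g \<and> m = rhoS g (g * e) e)"

definition transG :: "'a::semigroup_mult \<Rightarrow> 'a \<Rightarrow> ('a \<times> 'a \<times> 'a) set \<Rightarrow> ('a \<times> 'a \<times> 'a) set" where
  "transG e f m = (THE k. \<exists>u\<in>sandw e f. m = rG e u f \<and> k = lG f u e)"

definition transS :: "'a::semigroup_mult \<Rightarrow> 'a \<Rightarrow> 'a set \<times> 'a set \<times> ('a \<Rightarrow> 'a)
                       \<Rightarrow> 'a set \<times> 'a set \<times> ('a \<Rightarrow> 'a)" where
  "transS e f m = (THE k. \<exists>u\<in>sandw e f. m = rhoS e u f \<and> k = lamS f u e)"

end

theory Submission
  imports Defs
begin

text \<open>
  A morphism of L_G is an equivalence class of triples (e, u, f), and two triples are equivalent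
  exactly when they induce the same right translation rho(e, u, f): the domains Se and Sg agree
  iff e L g, and a right translation of Se is determined by its value at e, so t u = t v on Se
  iff e u = e v.  Hence the assignment r(e, u, f) \<mapsto> rho(e, u, f) is well defined and bijective,
  and identities, composition, inclusions, the cones r^e and the transposes are all computed on
  representatives, where they agree with their counterparts in L_S and R_S by construction.
  The argument for R_G is the mirror image.
\<close>

lemma bij_betw_image_image:
  assumes "\<And>x. x \<in> A \<Longrightarrow> F (g x) = h x"
    and "\<And>x y. x \<in> A \<Longrightarrow> y \<in> A \<Longrightarrow> g x = g y \<longleftrightarrow> h x = h y"
  shows "bij_betw F (g ` A) (h ` A)"
proof (rule bij_betw_imageI)
  show "inj_on F (g ` A)"
    using assms by (auto intro!: inj_onI)
  show "F ` g ` A = h ` A"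
    using assms(1) by (simp add: image_image)
qed

section \<open>Idempotents, principal one-sided ideals and Green's relations\<close>

lemma mem_idems_iff: "e \<in> idems \<longleftrightarrow> e * e = e"
  by (simp add: idems_def)

lemma greenL_sym: "greenL a b \<Longrightarrow> greenL b a"
  by (auto simp: greenL_def)

lemma greenR_sym: "greenR a b \<Longrightarrow> greenR b a"
  by (auto simp: greenR_def)

lemma greenL_trans: "greenL a b \<Longrightarrow> greenL b c \<Longrightarrow> greenL a c"
  unfolding greenL_def by (metis mult.assoc)

lemma greenR_trans: "greenR a b \<Longrightarrow> greenR b c \<Longrightarrow> greenR a c"
  unfolding greenR_def by (metis mult.assoc)

lemma greenL_idems_iff:
  assumes "e \<in> idems" "g \<in> idems"
  shows "greenL e g \<longleftrightarrow> e * g = e \<and> g * e = g"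
  using assms unfolding greenL_def mem_idems_iff by (metis mult.assoc)

lemma greenR_idems_iff:
  assumes "e \<in> idems" "g \<in> idems"
  shows "greenR e g \<longleftrightarrow> g * e = e \<and> e * g = g"
  using assms unfolding greenR_def mem_idems_iff by (metis mult.assoc)

lemma mem_lideal_iff: "e \<in> idems \<Longrightarrow> x \<in> lideal e \<longleftrightarrow> x * e = x"
  unfolding lideal_def mem_idems_iff by (auto simp: mult.assoc) (metis)

lemma mem_rideal_iff: "e \<in> idems \<Longrightarrow> x \<in> rideal e \<longleftrightarrow> e * x = x"
  unfolding rideal_def mem_idems_iff by (auto simp flip: mult.assoc) (metis)

lemma idem_mem_lideal: "e \<in> idems \<Longrightarrow> e \<in> lideal e"
  by (simp add: mem_lideal_iff mem_idems_iff)

lemma idem_mem_rideal: "e \<in> idems \<Longrightarrow> e \<in> rideal e"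
  by (simp add: mem_rideal_iff mem_idems_iff)

lemma mem_sandw_iff:
  "e \<in> idems \<Longrightarrow> f \<in> idems \<Longrightarrow>
    u \<in> sandw e f \<longleftrightarrow> e * u = u \<and> u * f = u"
  unfolding sandw_def mem_idems_iff by (auto simp: mult.assoc) (metis mult.assoc, metis)

lemma lideal_subset_iff:
  "e \<in> idems \<Longrightarrow> f \<in> idems \<Longrightarrow>
    lideal e \<subseteq> lideal f \<longleftrightarrow> e * f = e"
  using mem_lideal_iff mem_idems_iff by (metis mult.assoc subsetI subsetD)

lemma rideal_subset_iff:
  "e \<in> idems \<Longrightarrow> f \<in> idems \<Longrightarrow>
    rideal e \<subseteq> rideal f \<longleftrightarrow> f * e = e"
  using mem_rideal_iff mem_idems_iff by (metis mult.assoc subsetI subsetD)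

lemma lideal_eq_iff: "e \<in> idems \<Longrightarrow> g \<in> idems \<Longrightarrow> lideal e = lideal g \<longleftrightarrow> greenL e g"
  by (auto simp: greenL_idems_iff lideal_subset_iff set_eq_subset)

lemma rideal_eq_iff: "e \<in> idems \<Longrightarrow> g \<in> idems \<Longrightarrow> rideal e = rideal g \<longleftrightarrow> greenR e g"
  by (auto simp: greenR_idems_iff rideal_subset_iff set_eq_subset)

lemma Lcl_eq_iff:
  assumes "e \<in> idems" "g \<in> idems"
  shows "Lcl e = Lcl g \<longleftrightarrow> greenL e g"
proof
  assume "Lcl e = Lcl g"
  moreover have "e \<in> Lcl e"
    using assms by (simp add: Lcl_def greenL_def)
  ultimately show "greenL e g"
    by (simp add: Lcl_def)
next
  assume "greenL e g"
  then have "greenL x e \<longleftrightarrow> greenL x g" for x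
    using greenL_sym greenL_trans by blast
  then show "Lcl e = Lcl g"
    by (auto simp: Lcl_def)
qed

lemma Rcl_eq_iff:
  assumes "e \<in> idems" "g \<in> idems"
  shows "Rcl e = Rcl g \<longleftrightarrow> greenR e g"
proof
  assume "Rcl e = Rcl g"
  moreover have "e \<in> Rcl e"
    using assms by (simp add: Rcl_def greenR_def)
  ultimately show "greenR e g"
    by (simp add: Rcl_def)
next
  assume "greenR e g"
  then have "greenR x e \<longleftrightarrow> greenR x g" for x
    using greenR_sym greenR_trans by blast
  then show "Rcl e = Rcl g"
    by (auto simp: Rcl_def)
qed

lemma Lcl_eq_iff_lideal_eq:
  "e \<in> idems \<Longrightarrow> g \<in> idems \<Longrightarrow>
    Lcl e = Lcl g \<longleftrightarrow> lideal e = lideal g"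
  by (simp add: Lcl_eq_iff lideal_eq_iff)

lemma Rcl_eq_iff_rideal_eq:
  "e \<in> idems \<Longrightarrow> g \<in> idems \<Longrightarrow>
    Rcl e = Rcl g \<longleftrightarrow> rideal e = rideal g"
  by (simp add: Rcl_eq_iff rideal_eq_iff)

lemma LGtrip_iff: "(e, u, f) \<in> LGtrip \<longleftrightarrow> e \<in> idems \<and> f \<in> idems \<and> e * u = u \<and> u * f = u"
  unfolding LGtrip_def using mem_sandw_iff by blast

lemma RGtrip_iff: "(e, u, f) \<in> RGtrip \<longleftrightarrow> e \<in> idems \<and> f \<in> idems \<and> f * u = u \<and> u * e = u"
  unfolding RGtrip_def using mem_sandw_iff by blast

lemma LGtrip_mult: "(e, u, f) \<in> LGtrip \<Longrightarrow> (f, v, g) \<in> LGtrip \<Longrightarrow> (e, u * v, g) \<in> LGtrip"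
  by (simp add: LGtrip_iff) (metis mult.assoc)

lemma RGtrip_mult: "(e, u, f) \<in> RGtrip \<Longrightarrow> (f, v, g) \<in> RGtrip \<Longrightarrow> (e, v * u, g) \<in> RGtrip"
  by (simp add: RGtrip_iff) (metis mult.assoc)

lemma LGtrip_idem_incl: "e \<in> idems \<Longrightarrow> f \<in> idems \<Longrightarrow> e * f = e \<Longrightarrow> (e, e, f) \<in> LGtrip"
  by (simp add: LGtrip_iff mem_idems_iff)

lemma RGtrip_idem_incl: "e \<in> idems \<Longrightarrow> f \<in> idems \<Longrightarrow> f * e = e \<Longrightarrow> (e, e, f) \<in> RGtrip"
  by (simp add: RGtrip_iff mem_idems_iff)

lemma LGtrip_cone: "e \<in> idems \<Longrightarrow> g \<in> idems \<Longrightarrow> (g, g * e, e) \<in> LGtrip"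
  by (simp add: LGtrip_iff mem_idems_iff) (metis mult.assoc)

section \<open>Morphisms of L_G and R_G as equivalence classes\<close>

definition LG_equiv :: "('a::semigroup_mult \<times> 'a \<times> 'a) rel" where
  "LG_equiv = {((e, u, f), (g, v, h)). (e, u, f) \<in> LGtrip \<and> (g, v, h) \<in> LGtrip \<and>
     greenL e g \<and> greenL f h \<and> u = e * v}"

definition RG_equiv :: "('a::semigroup_mult \<times> 'a \<times> 'a) rel" where
  "RG_equiv = {((e, u, f), (g, v, h)). (e, u, f) \<in> RGtrip \<and> (g, v, h) \<in> RGtrip \<and>
     greenR e g \<and> greenR f h \<and> u = v * e}"

lemma sym_LG_equiv: "sym (LG_equiv :: ('a::semigroup_mult \<times> 'a \<times> 'a) rel)"
proof (rule symI)
  fix x y :: "'a \<times> 'a \<times> 'a"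
  assume rel: "(x, y) \<in> LG_equiv"
  obtain e u f g v h where xy: "x = (e, u, f)" "y = (g, v, h)"
    by (cases x, cases y) auto
  have "g * e = g" "g * v = v" "u = e * v"
    using rel by (auto simp: xy LG_equiv_def LGtrip_iff greenL_idems_iff)
  then have "v = g * u"
    by (simp flip: mult.assoc)
  with rel show "(y, x) \<in> LG_equiv"
    by (auto simp: xy LG_equiv_def greenL_def)
qed

lemma sym_RG_equiv: "sym (RG_equiv :: ('a::semigroup_mult \<times> 'a \<times> 'a) rel)"
proof (rule symI)
  fix x y :: "'a \<times> 'a \<times> 'a"
  assume rel: "(x, y) \<in> RG_equiv"
  obtain e u f g v h where xy: "x = (e, u, f)" "y = (g, v, h)"
    by (cases x, cases y) auto
  have "e * g = g" "v * g = v" "u = v * e"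
    using rel by (auto simp: xy RG_equiv_def RGtrip_iff greenR_idems_iff)
  then have "v = u * g"
    by (simp add: mult.assoc)
  with rel show "(y, x) \<in> RG_equiv"
    by (auto simp: xy RG_equiv_def greenR_def)
qed

lemma equiv_LG_equiv: "equiv LGtrip LG_equiv"
proof (rule equivI)
  show "refl_on LGtrip LG_equiv"
    by (rule refl_onI) (auto simp: LG_equiv_def LGtrip_iff greenL_def)
  show "trans LG_equiv"
    by (rule transI) (auto simp: LG_equiv_def LGtrip_iff greenL_idems_iff intro: greenL_trans simp flip: mult.assoc)
  show "LG_equiv \<subseteq> LGtrip \<times> LGtrip"
    by (auto simp: LG_equiv_def)
qed (rule sym_LG_equiv)

lemma equiv_RG_equiv: "equiv RGtrip RG_equiv"
proof (rule equivI)
  show "refl_on RGtrip RG_equiv"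
    by (rule refl_onI) (auto simp: RG_equiv_def RGtrip_iff greenR_def)
  show "trans RG_equiv"
    by (rule transI) (auto simp: RG_equiv_def RGtrip_iff greenR_idems_iff intro: greenR_trans simp: mult.assoc)
  show "RG_equiv \<subseteq> RGtrip \<times> RGtrip"
    by (auto simp: RG_equiv_def)
qed (rule sym_RG_equiv)

lemma rG_eq_equiv_class: "(e, u, f) \<in> LGtrip \<Longrightarrow> rG e u f = LG_equiv `` {(e, u, f)}"
  by (auto simp: rG_def LG_equiv_def)

lemma lG_eq_equiv_class: "(e, u, f) \<in> RGtrip \<Longrightarrow> lG e u f = RG_equiv `` {(e, u, f)}"
  by (auto simp: lG_def RG_equiv_def)

lemma rG_eq_iff:
  "(e, u, f) \<in> LGtrip \<Longrightarrow> (g, v, h) \<in> LGtrip \<Longrightarrow>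
    rG e u f = rG g v h \<longleftrightarrow> greenL e g \<and> greenL f h \<and> u = e * v"
  by (simp add: rG_eq_equiv_class eq_equiv_class_iff[OF equiv_LG_equiv]) (simp add: LG_equiv_def)

lemma lG_eq_iff:
  "(e, u, f) \<in> RGtrip \<Longrightarrow> (g, v, h) \<in> RGtrip \<Longrightarrow>
    lG e u f = lG g v h \<longleftrightarrow> greenR e g \<and> greenR f h \<and> u = v * e"
  by (simp add: lG_eq_equiv_class eq_equiv_class_iff[OF equiv_RG_equiv]) (simp add: RG_equiv_def)

lemma restrict_right_mult_eq_iff:
  assumes "e \<in> idems"
  shows "restrict (\<lambda>t. t * u) (lideal e) = restrict (\<lambda>t. t * v) (lideal e) \<longleftrightarrow> e * u = e * v"
proof
  assume "restrict (\<lambda>t. t * u) (lideal e) = restrict (\<lambda>t. t * v) (lideal e)"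
  then have "restrict (\<lambda>t. t * u) (lideal e) e = restrict (\<lambda>t. t * v) (lideal e) e"
    by simp
  then show "e * u = e * v"
    using idem_mem_lideal[OF assms] by simp
next
  assume "e * u = e * v"
  then have "t * u = t * v" if "t * e = t" for t
    using that by (metis mult.assoc)
  then show "restrict (\<lambda>t. t * u) (lideal e) = restrict (\<lambda>t. t * v) (lideal e)"
    using mem_lideal_iff[OF assms] by (auto intro: restrict_ext)
qed

lemma restrict_left_mult_eq_iff:
  assumes "e \<in> idems"
  shows "restrict (\<lambda>t. u * t) (rideal e) = restrict (\<lambda>t. v * t) (rideal e) \<longleftrightarrow> u * e = v * e"
proof
  assume "restrict (\<lambda>t. u * t) (rideal e) = restrict (\<lambda>t. v * t) (rideal e)"
  then have "restrict (\<lambda>t. u * t) (rideal e) e = restrict (\<lambda>t. v * t) (rideal e) e"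
    by simp
  then show "u * e = v * e"
    using idem_mem_rideal[OF assms] by simp
next
  assume "u * e = v * e"
  then have "u * t = v * t" if "e * t = t" for t
    using that by (metis mult.assoc)
  then show "restrict (\<lambda>t. u * t) (rideal e) = restrict (\<lambda>t. v * t) (rideal e)"
    using mem_rideal_iff[OF assms] by (auto intro: restrict_ext)
qed

lemma rhoS_eq_iff:
  assumes "(e, u, f) \<in> LGtrip" "(g, v, h) \<in> LGtrip"
  shows "rhoS e u f = rhoS g v h \<longleftrightarrow> greenL e g \<and> greenL f h \<and> u = e * v"
proof -
  have "rhoS e u f = rhoS g v h \<longleftrightarrow> lideal e = lideal g \<and> lideal f = lideal h \<and>
      restrict (\<lambda>t. t * u) (lideal e) = restrict (\<lambda>t. t * v) (lideal e)"
    by (auto simp: rhoS_def)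
  also have "\<dots> \<longleftrightarrow> greenL e g \<and> greenL f h \<and> e * u = e * v"
    using assms by (simp add: LGtrip_iff lideal_eq_iff restrict_right_mult_eq_iff)
  finally show ?thesis
    using assms by (simp add: LGtrip_iff)
qed

lemma lamS_eq_iff:
  assumes "(e, u, f) \<in> RGtrip" "(g, v, h) \<in> RGtrip"
  shows "lamS e u f = lamS g v h \<longleftrightarrow> greenR e g \<and> greenR f h \<and> u = v * e"
proof -
  have "lamS e u f = lamS g v h \<longleftrightarrow> rideal e = rideal g \<and> rideal f = rideal h \<and>
      restrict (\<lambda>t. u * t) (rideal e) = restrict (\<lambda>t. v * t) (rideal e)"
    by (auto simp: lamS_def)
  also have "\<dots> \<longleftrightarrow> greenR e g \<and> greenR f h \<and> u * e = v * e"
    using assms by (simp add: RGtrip_iff rideal_eq_iff restrict_left_mult_eq_iff)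
  finally show ?thesis
    using assms by (simp add: RGtrip_iff)
qed

lemma rG_eq_iff_rhoS_eq:
  "(e, u, f) \<in> LGtrip \<Longrightarrow> (g, v, h) \<in> LGtrip \<Longrightarrow>
    rG e u f = rG g v h \<longleftrightarrow> rhoS e u f = rhoS g v h"
  by (simp add: rG_eq_iff rhoS_eq_iff)

lemma lG_eq_iff_lamS_eq:
  "(e, u, f) \<in> RGtrip \<Longrightarrow> (g, v, h) \<in> RGtrip \<Longrightarrow>
    lG e u f = lG g v h \<longleftrightarrow> lamS e u f = lamS g v h"
  by (simp add: lG_eq_iff lamS_eq_iff)

lemma rG_eqD:
  "(e, u, f) \<in> LGtrip \<Longrightarrow> (g, v, h) \<in> LGtrip \<Longrightarrow> rG e u f = rG g v h \<Longrightarrow>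
    Lcl e = Lcl g \<and> Lcl f = Lcl h"
  by (simp add: rG_eq_iff Lcl_eq_iff LGtrip_iff)

lemma lG_eqD:
  "(e, u, f) \<in> RGtrip \<Longrightarrow> (g, v, h) \<in> RGtrip \<Longrightarrow> lG e u f = lG g v h \<Longrightarrow>
    Rcl e = Rcl g \<and> Rcl f = Rcl h"
  by (simp add: lG_eq_iff Rcl_eq_iff RGtrip_iff)

lemma rG_reindex_dom:
  assumes "(e, u, f) \<in> LGtrip" "e' \<in> idems" "greenL e e'"
  shows "(e', e' * u, f) \<in> LGtrip" "rG e u f = rG e' (e' * u) f"
proof -
  have "e * e' = e" "e * u = u" "u * f = u" "e' * e' = e'" "f \<in> idems"
    using assms by (auto simp: LGtrip_iff greenL_idems_iff mem_idems_iff)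
  then have "e' * (e' * u) = e' * u" "e' * u * f = e' * u" "u = e * (e' * u)"
    by (metis mult.assoc)+
  then show triple: "(e', e' * u, f) \<in> LGtrip"
    using assms \<open>f \<in> idems\<close> by (simp add: LGtrip_iff)
  show "rG e u f = rG e' (e' * u) f"
    using rG_eq_iff[OF assms(1) triple] assms \<open>u = e * (e' * u)\<close> by (simp add: greenL_def)
qed

lemma lG_reindex_dom:
  assumes "(e, u, f) \<in> RGtrip" "e' \<in> idems" "greenR e e'"
  shows "(e', u * e', f) \<in> RGtrip" "lG e u f = lG e' (u * e') f"
proof -
  have "e' * e = e" "u * e = u" "f * u = u" "e' * e' = e'" "f \<in> idems"
    using assms by (auto simp: RGtrip_iff greenR_idems_iff mem_idems_iff)
  then have "u * e' * e' = u * e'" "f * (u * e') = u * e'" "u = u * e' * e"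
    by (metis mult.assoc)+
  then show triple: "(e', u * e', f) \<in> RGtrip"
    using assms \<open>f \<in> idems\<close> by (simp add: RGtrip_iff)
  show "lG e u f = lG e' (u * e') f"
    using lG_eq_iff[OF assms(1) triple] assms \<open>u = u * e' * e\<close> by (simp add: greenR_def)
qed

lemma rhoS_idem: "e \<in> idems \<Longrightarrow> rhoS e e f = (lideal e, lideal f, restrict id (lideal e))"
  by (auto simp: rhoS_def mem_lideal_iff intro: restrict_ext)

lemma lamS_idem: "e \<in> idems \<Longrightarrow> lamS e e f = (rideal e, rideal f, restrict id (rideal e))"
  by (auto simp: lamS_def mem_rideal_iff intro: restrict_ext)

lemma LG_cat_simps:
  "Ob LG_cat = Lcl ` idems"
  "Ar LG_cat = (\<lambda>(e, u, f). rG e u f) ` LGtrip"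
  "Incl LG_cat = (\<lambda>(e, f). rG e e f) ` {(e, f). e \<in> idems \<and> f \<in> idems \<and> e * f = e}"
  by (auto simp: LG_cat_def image_def)

lemma RG_cat_simps:
  "Ob RG_cat = Rcl ` idems"
  "Ar RG_cat = (\<lambda>(e, u, f). lG e u f) ` RGtrip"
  "Incl RG_cat = (\<lambda>(e, f). lG e e f) ` {(e, f). e \<in> idems \<and> f \<in> idems \<and> f * e = e}"
  by (auto simp: RG_cat_def image_def)

lemma LS_cat_simps:
  "Ob LS_cat = lideal ` idems"
  "Ar LS_cat = (\<lambda>(e, u, f). rhoS e u f) ` LGtrip"
  "cDom LS_cat = fst" "cCod LS_cat = (\<lambda>m. fst (snd m))"
  "Idm LS_cat = (\<lambda>A. (A, A, restrict id A))" "Comp LS_cat = mcomp"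
  by (force simp: LS_cat_def image_def)+

lemma RS_cat_simps:
  "Ob RS_cat = rideal ` idems"
  "Ar RS_cat = (\<lambda>(e, u, f). lamS e u f) ` RGtrip"
  "cDom RS_cat = fst" "cCod RS_cat = (\<lambda>m. fst (snd m))"
  "Idm RS_cat = (\<lambda>A. (A, A, restrict id A))" "Comp RS_cat = mcomp"
  by (force simp: RS_cat_def image_def)+

lemma LS_cat_Incl:
  "Incl LS_cat = (\<lambda>(e, f). rhoS e e f) ` {(e, f). e \<in> idems \<and> f \<in> idems \<and> e * f = e}"
  unfolding LS_cat_def image_def
  by (auto simp: lideal_subset_iff)
    (metis rhoS_idem, metis rhoS_idem lideal_subset_iff)

lemma RS_cat_Incl:
  "Incl RS_cat = (\<lambda>(e, f). lamS e e f) ` {(e, f). e \<in> idems \<and> f \<in> idems \<and> f * e = e}"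
  unfolding RS_cat_def image_def
  by (auto simp: rideal_subset_iff)
    (metis lamS_idem, metis lamS_idem rideal_subset_iff)

lemma LG_cat_cDom: "(e, u, f) \<in> LGtrip \<Longrightarrow> cDom LG_cat (rG e u f) = Lcl e"
  by (simp add: LG_cat_def, rule the_equality) (use rG_eqD in blast)+

lemma LG_cat_cCod: "(e, u, f) \<in> LGtrip \<Longrightarrow> cCod LG_cat (rG e u f) = Lcl f"
  by (simp add: LG_cat_def, rule the_equality) (use rG_eqD in blast)+

lemma rG_idem_cong: "e \<in> idems \<Longrightarrow> g \<in> idems \<Longrightarrow> Lcl e = Lcl g \<Longrightarrow> rG e e e = rG g g g"
  by (simp add: rG_eq_iff LGtrip_iff mem_idems_iff Lcl_eq_iff greenL_idems_iff)

lemma LG_cat_Idm: "e \<in> idems \<Longrightarrow> Idm LG_cat (Lcl e) = rG e e e"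
  by (simp add: LG_cat_def, rule the_equality) (use rG_idem_cong in blast)+

lemma rG_mult_cong:
  assumes "(e, u, f) \<in> LGtrip" "(f, v, g) \<in> LGtrip" "(e', u', f') \<in> LGtrip" "(f', v', g') \<in> LGtrip"
    and "rG e u f = rG e' u' f'" "rG f v g = rG f' v' g'"
  shows "rG e (u * v) g = rG e' (u' * v') g'"
proof -
  have "u = e * u'" "v = f * v'" "u' * f' = u'" "f' * f = f'"
    using assms by (auto simp: rG_eq_iff LGtrip_iff greenL_idems_iff)
  then have "u * v = e * (u' * v')"
    by (metis mult.assoc)
  moreover have "greenL e e'" "greenL g g'"
    using assms by (auto simp: rG_eq_iff)
  ultimately show ?thesis
    unfolding rG_eq_iff[OF LGtrip_mult[OF assms(1,2)] LGtrip_mult[OF assms(3,4)]] by blast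
qed

lemma LG_cat_Comp:
  "(e, u, f) \<in> LGtrip \<Longrightarrow> (f, v, g) \<in> LGtrip \<Longrightarrow> Comp LG_cat (rG e u f) (rG f v g) = rG e (u * v) g"
  by (simp add: LG_cat_def, rule the_equality) (use rG_mult_cong in blast)+

lemma RG_cat_cDom: "(e, u, f) \<in> RGtrip \<Longrightarrow> cDom RG_cat (lG e u f) = Rcl e"
  by (simp add: RG_cat_def, rule the_equality) (use lG_eqD in blast)+

lemma RG_cat_cCod: "(e, u, f) \<in> RGtrip \<Longrightarrow> cCod RG_cat (lG e u f) = Rcl f"
  by (simp add: RG_cat_def, rule the_equality) (use lG_eqD in blast)+

lemma lG_idem_cong: "e \<in> idems \<Longrightarrow> g \<in> idems \<Longrightarrow> Rcl e = Rcl g \<Longrightarrow> lG e e e = lG g g g"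
  by (simp add: lG_eq_iff RGtrip_iff mem_idems_iff Rcl_eq_iff greenR_idems_iff)

lemma RG_cat_Idm: "e \<in> idems \<Longrightarrow> Idm RG_cat (Rcl e) = lG e e e"
  by (simp add: RG_cat_def, rule the_equality) (use lG_idem_cong in blast)+

lemma lG_mult_cong:
  assumes "(e, u, f) \<in> RGtrip" "(f, v, g) \<in> RGtrip" "(e', u', f') \<in> RGtrip" "(f', v', g') \<in> RGtrip"
    and "lG e u f = lG e' u' f'" "lG f v g = lG f' v' g'"
  shows "lG e (v * u) g = lG e' (v' * u') g'"
proof -
  have "u = u' * e" "v = v' * f" "f' * u' = u'" "f * f' = f'"
    using assms by (auto simp: lG_eq_iff RGtrip_iff greenR_idems_iff)
  then have "v * u = (v' * u') * e"
    by (metis mult.assoc)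
  moreover have "greenR e e'" "greenR g g'"
    using assms by (auto simp: lG_eq_iff)
  ultimately show ?thesis
    unfolding lG_eq_iff[OF RGtrip_mult[OF assms(1,2)] RGtrip_mult[OF assms(3,4)]] by blast
qed

lemma RG_cat_Comp:
  "(e, u, f) \<in> RGtrip \<Longrightarrow> (f, v, g) \<in> RGtrip \<Longrightarrow> Comp RG_cat (lG e u f) (lG f v g) = lG e (v * u) g"
  by (simp add: RG_cat_def, rule the_equality) (use lG_mult_cong in blast)+

lemma mcomp_rhoS:
  assumes "(e, u, f) \<in> LGtrip"
  shows "mcomp (rhoS e u f) (rhoS f v g) = rhoS e (u * v) g"
proof -
  have "t * u \<in> lideal f" for t
    using assms by (simp add: LGtrip_iff mem_lideal_iff mult.assoc)
  then have "restrict (\<lambda>t. restrict (\<lambda>t. t * v) (lideal f) (restrict (\<lambda>t. t * u) (lideal e) t)) (lideal e)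
      = restrict (\<lambda>t. t * (u * v)) (lideal e)"
    by (auto intro: restrict_ext simp: mult.assoc)
  then show ?thesis
    by (simp add: mcomp_def rhoS_def)
qed

lemma mcomp_lamS:
  assumes "(e, u, f) \<in> RGtrip"
  shows "mcomp (lamS e u f) (lamS f v g) = lamS e (v * u) g"
proof -
  have "u * t \<in> rideal f" for t
    using assms by (simp add: RGtrip_iff mem_rideal_iff flip: mult.assoc)
  then have "restrict (\<lambda>t. restrict (\<lambda>t. v * t) (rideal f) (restrict (\<lambda>t. u * t) (rideal e) t)) (rideal e)
      = restrict (\<lambda>t. (v * u) * t) (rideal e)"
    by (auto intro: restrict_ext simp: mult.assoc)
  then show ?thesis
    by (simp add: mcomp_def lamS_def)
qed

section \<open>The isomorphisms of normal categories\<close>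

lemma Lob_Lcl: "e \<in> idems \<Longrightarrow> Lob (Lcl e) = lideal e"
  unfolding Lob_def by (rule the_equality) (auto simp: Lcl_eq_iff_lideal_eq)

lemma Rob_Rcl: "e \<in> idems \<Longrightarrow> Rob (Rcl e) = rideal e"
  unfolding Rob_def by (rule the_equality) (auto simp: Rcl_eq_iff_rideal_eq)

lemma Lar_rG: "(e, u, f) \<in> LGtrip \<Longrightarrow> Lar (rG e u f) = rhoS e u f"
  unfolding Lar_def by (rule the_equality) (auto simp: rG_eq_iff_rhoS_eq)

lemma Rar_lG: "(e, u, f) \<in> RGtrip \<Longrightarrow> Rar (lG e u f) = lamS e u f"
  unfolding Rar_def by (rule the_equality) (auto simp: lG_eq_iff_lamS_eq)

text \<open>The hypothesis only makes the middle idempotents L-related, whereas Comp LG_cat is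
  defined on representatives sharing the middle idempotent; rG_reindex_dom closes the gap.\<close>

lemma Lar_Comp:
  assumes "(e, u, f) \<in> LGtrip" "(f', v, g) \<in> LGtrip" "Lcl f = Lcl f'"
  shows "Lar (Comp LG_cat (rG e u f) (rG f' v g)) = mcomp (Lar (rG e u f)) (Lar (rG f' v g))"
proof -
  have "f \<in> idems" "greenL f' f"
    using assms by (simp_all add: LGtrip_iff Lcl_eq_iff greenL_sym)
  then have "(f, f * v, g) \<in> LGtrip" "rG f' v g = rG f (f * v) g"
    by (rule rG_reindex_dom[OF assms(2)])+
  then show ?thesis
    using assms(1) by (simp add: LG_cat_Comp Lar_rG LGtrip_mult mcomp_rhoS)
qed

lemma Rar_Comp:
  assumes "(e, u, f) \<in> RGtrip" "(f', v, g) \<in> RGtrip" "Rcl f = Rcl f'"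
  shows "Rar (Comp RG_cat (lG e u f) (lG f' v g)) = mcomp (Rar (lG e u f)) (Rar (lG f' v g))"
proof -
  have "f \<in> idems" "greenR f' f"
    using assms by (simp_all add: RGtrip_iff Rcl_eq_iff greenR_sym)
  then have "(f, v * f, g) \<in> RGtrip" "lG f' v g = lG f (v * f) g"
    by (rule lG_reindex_dom[OF assms(2)])+
  then show ?thesis
    using assms(1) by (simp add: RG_cat_Comp Rar_lG RGtrip_mult mcomp_lamS)
qed

lemma iso_ncat_LG_LS: "iso_ncat (LG_cat :: ('a::semigroup_mult set, _) ncat) LS_cat Lob Lar"
proof -
  have "bij_betw Lob (Ob LG_cat) (Ob LS_cat)"
    unfolding LG_cat_simps LS_cat_simps
    by (rule bij_betw_image_image) (simp_all add: Lob_Lcl Lcl_eq_iff_lideal_eq)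
  moreover have "bij_betw Lar (Ar LG_cat) (Ar LS_cat)"
    unfolding LG_cat_simps LS_cat_simps
    by (rule bij_betw_image_image) (clarsimp simp: Lar_rG rG_eq_iff_rhoS_eq)+
  moreover have "\<forall>m\<in>Ar LG_cat. cDom LS_cat (Lar m) = Lob (cDom LG_cat m) \<and>
      cCod LS_cat (Lar m) = Lob (cCod LG_cat m)"
    by (auto simp: LG_cat_simps LS_cat_simps Lar_rG LG_cat_cDom LG_cat_cCod Lob_Lcl LGtrip_iff rhoS_def)
  moreover have "\<forall>c\<in>Ob LG_cat. Lar (Idm LG_cat c) = Idm LS_cat (Lob c)"
    by (auto simp: LG_cat_simps LS_cat_simps LG_cat_Idm Lar_rG Lob_Lcl rhoS_idem LGtrip_iff mem_idems_iff)
  moreover have "\<forall>m\<in>Ar LG_cat. \<forall>n\<in>Ar LG_cat. cCod LG_cat m = cDom LG_cat n \<longrightarrow>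
      Lar (Comp LG_cat m n) = Comp LS_cat (Lar m) (Lar n)"
    by (auto simp: LG_cat_simps LS_cat_simps LG_cat_cDom LG_cat_cCod Lar_Comp)
  moreover have "\<forall>m\<in>Incl LG_cat. Lar m \<in> Incl LS_cat"
    by (auto simp: LG_cat_simps LS_cat_Incl Lar_rG LGtrip_idem_incl)
  moreover have "m \<in> Incl LG_cat" if arr: "m \<in> Ar LG_cat" and incl: "Lar m \<in> Incl LS_cat"
    for m :: "('a \<times> 'a \<times> 'a) set"
  proof -
    obtain e u f where euf: "(e, u, f) \<in> LGtrip" "m = rG e u f"
      using arr by (auto simp: LG_cat_simps)
    moreover obtain e' f' where e'f': "e' \<in> idems" "f' \<in> idems" "e' * f' = e'" "Lar m = rhoS e' e' f'"
      using incl by (auto simp: LS_cat_Incl)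
    ultimately have "m = rG e' e' f'"
      by (simp add: Lar_rG rG_eq_iff_rhoS_eq LGtrip_idem_incl)
    with e'f' show ?thesis
      by (auto simp: LG_cat_simps)
  qed
  ultimately show ?thesis
    unfolding iso_ncat_def by blast
qed

lemma iso_ncat_RG_RS: "iso_ncat (RG_cat :: ('a::semigroup_mult set, _) ncat) RS_cat Rob Rar"
proof -
  have "bij_betw Rob (Ob RG_cat) (Ob RS_cat)"
    unfolding RG_cat_simps RS_cat_simps
    by (rule bij_betw_image_image) (simp_all add: Rob_Rcl Rcl_eq_iff_rideal_eq)
  moreover have "bij_betw Rar (Ar RG_cat) (Ar RS_cat)"
    unfolding RG_cat_simps RS_cat_simps
    by (rule bij_betw_image_image) (clarsimp simp: Rar_lG lG_eq_iff_lamS_eq)+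
  moreover have "\<forall>m\<in>Ar RG_cat. cDom RS_cat (Rar m) = Rob (cDom RG_cat m) \<and>
      cCod RS_cat (Rar m) = Rob (cCod RG_cat m)"
    by (auto simp: RG_cat_simps RS_cat_simps Rar_lG RG_cat_cDom RG_cat_cCod Rob_Rcl RGtrip_iff lamS_def)
  moreover have "\<forall>c\<in>Ob RG_cat. Rar (Idm RG_cat c) = Idm RS_cat (Rob c)"
    by (auto simp: RG_cat_simps RS_cat_simps RG_cat_Idm Rar_lG Rob_Rcl lamS_idem RGtrip_iff mem_idems_iff)
  moreover have "\<forall>m\<in>Ar RG_cat. \<forall>n\<in>Ar RG_cat. cCod RG_cat m = cDom RG_cat n \<longrightarrow>
      Rar (Comp RG_cat m n) = Comp RS_cat (Rar m) (Rar n)"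
    by (auto simp: RG_cat_simps RS_cat_simps RG_cat_cDom RG_cat_cCod Rar_Comp)
  moreover have "\<forall>m\<in>Incl RG_cat. Rar m \<in> Incl RS_cat"
    by (auto simp: RG_cat_simps RS_cat_Incl Rar_lG RGtrip_idem_incl)
  moreover have "m \<in> Incl RG_cat" if arr: "m \<in> Ar RG_cat" and incl: "Rar m \<in> Incl RS_cat"
    for m :: "('a \<times> 'a \<times> 'a) set"
  proof -
    obtain e u f where euf: "(e, u, f) \<in> RGtrip" "m = lG e u f"
      using arr by (auto simp: RG_cat_simps)
    moreover obtain e' f' where e'f': "e' \<in> idems" "f' \<in> idems" "f' * e' = e'" "Rar m = lamS e' e' f'"
      using incl by (auto simp: RS_cat_Incl)
    ultimately have "m = lG e' e' f'"
      by (simp add: Rar_lG lG_eq_iff_lamS_eq RGtrip_idem_incl)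
    with e'f' show ?thesis
      by (auto simp: RG_cat_simps)
  qed
  ultimately show ?thesis
    unfolding iso_ncat_def by blast
qed

section \<open>Cones and transposes\<close>

lemma rG_cone_cong:
  assumes "e \<in> idems" "g \<in> idems" "g' \<in> idems" "Lcl g = Lcl g'"
  shows "rG g (g * e) e = rG g' (g' * e) e"
proof -
  have "greenL g g'"
    using assms by (simp add: Lcl_eq_iff)
  moreover have "g * e = g * (g' * e)"
    using calculation assms by (simp add: greenL_idems_iff flip: mult.assoc)
  ultimately show ?thesis
    unfolding rG_eq_iff[OF LGtrip_cone[OF assms(1,2)] LGtrip_cone[OF assms(1,3)]]
    by (simp add: greenL_def)
qed

lemma rcone_Lcl: "e \<in> idems \<Longrightarrow> g \<in> idems \<Longrightarrow> rcone e (Lcl g) = rG g (g * e) e"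
  unfolding rcone_def by (rule the_equality) (use rG_cone_cong in blast)+

lemma rhoS_cone_cong:
  assumes "e \<in> idems" "g \<in> idems" "g' \<in> idems" "lideal g = lideal g'"
  shows "rhoS g (g * e) e = rhoS g' (g' * e) e"
  using rG_cone_cong[OF assms(1-3)] assms
  by (simp add: Lcl_eq_iff_lideal_eq rG_eq_iff_rhoS_eq[OF LGtrip_cone LGtrip_cone])

lemma rhocone_lideal: "e \<in> idems \<Longrightarrow> g \<in> idems \<Longrightarrow> rhocone e (lideal g) = rhoS g (g * e) e"
  unfolding rhocone_def by (rule the_equality) (use rhoS_cone_cong in blast)+

lemma rG_eq_iff_same_ends:
  "(e, u, f) \<in> LGtrip \<Longrightarrow> (e, v, f) \<in> LGtrip \<Longrightarrow>
    rG e u f = rG e v f \<longleftrightarrow> u = v"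
  by (simp add: rG_eq_iff LGtrip_iff greenL_def)

lemma rhoS_eq_iff_same_ends:
  "(e, u, f) \<in> LGtrip \<Longrightarrow> (e, v, f) \<in> LGtrip \<Longrightarrow>
    rhoS e u f = rhoS e v f \<longleftrightarrow> u = v"
  by (simp add: rhoS_eq_iff LGtrip_iff greenL_def)

lemma transG_rG:
  "e \<in> idems \<Longrightarrow> f \<in> idems \<Longrightarrow> u \<in> sandw e f \<Longrightarrow>
    transG e f (rG e u f) = lG f u e"
  unfolding transG_def by (rule the_equality) (auto simp: rG_eq_iff_same_ends LGtrip_def)

lemma transS_rhoS:
  "e \<in> idems \<Longrightarrow> f \<in> idems \<Longrightarrow> u \<in> sandw e f \<Longrightarrow>
    transS e f (rhoS e u f) = lamS f u e"
  unfolding transS_def by (rule the_equality) (auto simp: rhoS_eq_iff_same_ends LGtrip_def)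

theorem mainTheorem19:
  fixes dummy :: "'a::semigroup_mult"
  assumes regular: "\<forall>a::'a. \<exists>x. a * x * a = a"
  shows "(\<forall>e\<in>(idems :: 'a set). Lob (Lcl e) = lideal e \<and> Rob (Rcl e) = rideal e)
    \<and> (\<forall>e u f. (e, u, f) \<in> (LGtrip :: ('a \<times> 'a \<times> 'a) set) \<longrightarrow> Lar (rG e u f) = rhoS e u f)
    \<and> (\<forall>e u f. (e, u, f) \<in> (RGtrip :: ('a \<times> 'a \<times> 'a) set) \<longrightarrow> Rar (lG e u f) = lamS e u f)
    \<and> iso_ncat (LG_cat :: ('a set, _) ncat) LS_cat Lob Lar
    \<and> iso_ncat (RG_cat :: ('a set, _) ncat) RS_cat Rob Rar
    \<and> (\<forall>e\<in>(idems :: 'a set).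
         (Lob (Lcl e), Rob (Rcl e)) = (lideal e, rideal e) \<and> (lideal e, rideal e) \<in> EGS \<and>
         (\<forall>g\<in>idems. Lar (rcone e (Lcl g)) = rhocone e (Lob (Lcl g))))
    \<and> (\<forall>e\<in>(idems :: 'a set). \<forall>f\<in>idems. \<forall>u\<in>sandw e f.
         Rar (transG e f (rG e u f)) = transS e f (Lar (rG e u f)))"
proof (intro conjI)
  show "\<forall>e\<in>idems. Lob (Lcl e) = lideal e \<and> Rob (Rcl e) = rideal e"
    by (simp add: Lob_Lcl Rob_Rcl)
  show "\<forall>e u f. (e, u, f) \<in> LGtrip \<longrightarrow> Lar (rG e u f) = rhoS e u f"
    by (simp add: Lar_rG)
  show "\<forall>e u f. (e, u, f) \<in> RGtrip \<longrightarrow> Rar (lG e u f) = lamS e u f"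
    by (simp add: Rar_lG)
  show "iso_ncat LG_cat LS_cat Lob Lar"
    by (rule iso_ncat_LG_LS)
  show "iso_ncat RG_cat RS_cat Rob Rar"
    by (rule iso_ncat_RG_RS)
  show "\<forall>e\<in>idems. (Lob (Lcl e), Rob (Rcl e)) = (lideal e, rideal e) \<and> (lideal e, rideal e) \<in> EGS \<and>
      (\<forall>g\<in>idems. Lar (rcone e (Lcl g)) = rhocone e (Lob (Lcl g)))"
    by (auto simp: EGS_def Lob_Lcl Rob_Rcl rcone_Lcl rhocone_lideal Lar_rG LGtrip_cone)
  show "\<forall>e\<in>idems. \<forall>f\<in>idems. \<forall>u\<in>sandw e f. Rar (transG e f (rG e u f)) = transS e f (Lar (rG e u f))"
    by (simp add: transG_rG transS_rhoS Lar_rG Rar_lG LGtrip_def RGtrip_def)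
qed

end
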